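(* For all integers $k\ge 1$ and $j\ge 1$, setting $m=\binom{kj-1}{(k-1)j}$, the complete $k$-partite graph $K_{m*k}$ is not $(k-1)j$-choosable; that is, $\mathrm{ch}(K_{m*k})\ge (k-1)j+1$.
   Context: A list assignment $L$ for a graph $G$ assigns to each vertex $v$ a set $L(v)$ of colors. An $L$-coloring is a proper coloring $f$ of $G$ with $f(v)\in L(v)$ for all $v$. $G$ is $r$-choosable if it has an $L$-coloring for every list assignment $L$ with $|L(v)|\ge r$ for all $v$; the choice number $\mathrm{ch}(G)$ is the least such $r$. $K_{m*k}$ denotes the complete multipartite graph with $k$ parts of size $m$. *)

theory Defs
  imports Main
begin

text \<open>A graph is given by a vertex set V and a symmetric adjacency relation E.
  Colours are natural numbers (lists are finite, so any colour set can be relabelled).\<close>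

definition L_colouring :: "'v set \<Rightarrow> ('v \<Rightarrow> 'v \<Rightarrow> bool) \<Rightarrow> ('v \<Rightarrow> nat set) \<Rightarrow> ('v \<Rightarrow> nat) \<Rightarrow> bool" where
  "L_colouring V E L f \<longleftrightarrow>
     (\<forall>v\<in>V. f v \<in> L v) \<and> (\<forall>u\<in>V. \<forall>v\<in>V. E u v \<longrightarrow> f u \<noteq> f v)"

definition choosable :: "'v set \<Rightarrow> ('v \<Rightarrow> 'v \<Rightarrow> bool) \<Rightarrow> nat \<Rightarrow> bool" where
  "choosable V E r \<longleftrightarrow>
     (\<forall>L. (\<forall>v\<in>V. finite (L v) \<and> card (L v) \<ge> r) \<longrightarrow> (\<exists>f. L_colouring V E L f))"

definition cmp_vertices :: "nat \<Rightarrow> nat \<Rightarrow> (nat \<times> nat) set" where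
  "cmp_vertices m k = {0..<k} \<times> {0..<m}"

definition cmp_adj :: "nat \<times> nat \<Rightarrow> nat \<times> nat \<Rightarrow> bool" where
  "cmp_adj u v \<longleftrightarrow> fst u \<noteq> fst v"

end

theory Submission
  imports Defs
begin

text \<open>Give the vertices of every part of \<open>K_{m*k}\<close> the \<open>m = (N choose r)\<close> distinct
  \<open>r\<close>-subsets of an \<open>N\<close>-set \<open>S\<close>, with \<open>N = kj - 1\<close> and \<open>r = (k - 1)j\<close>. In an
  \<open>L\<close>-colouring the colours used on one part meet every \<open>r\<close>-subset of \<open>S\<close>, so they
  are at least \<open>N - r + 1 = j\<close> in number; and distinct parts use disjoint colour sets.
  Hence \<open>S\<close> would contain \<open>kj > N\<close> colours.\<close>

lemma choosableE:
  assumes "choosable V E r" "\<forall>v\<in>V. finite (L v) \<and> r \<le> card (L v)"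
  obtains f where "L_colouring V E L f"
  using assms unfolding choosable_def by blast

lemma card_lt_if_meets_all_subsets:
  assumes "finite S" "C \<subseteq> S"
    and meets: "\<And>A. A \<subseteq> S \<Longrightarrow> card A = r \<Longrightarrow> A \<inter> C \<noteq> {}"
  shows "card S < card C + r"
proof (rule ccontr)
  assume "\<not> card S < card C + r"
  moreover have "card (S - C) = card S - card C"
    using assms(1,2) by (meson card_Diff_subset finite_subset)
  ultimately have "r \<le> card (S - C)" by linarith
  then obtain A where "A \<subseteq> S - C" "card A = r"
    by (meson obtain_subset_with_card_n)
  with meets show False by blast
qed

lemma mult_le_card_if_disjoint_subsets:
  assumes "finite S"
    and sub: "\<And>i. i < k \<Longrightarrow> C i \<subseteq> S"
    and big: "\<And>i. i < k \<Longrightarrow> j \<le> card (C i)"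
    and disj: "\<And>i i'. i < k \<Longrightarrow> i' < k \<Longrightarrow> i \<noteq> i' \<Longrightarrow> C i \<inter> C i' = {}"
  shows "k * j \<le> card S"
proof -
  have fin: "finite (C i)" if "i < k" for i
    using sub[OF that] \<open>finite S\<close> by (rule finite_subset)
  have "k * j = (\<Sum>i<k. j)" by simp
  also have "\<dots> \<le> (\<Sum>i<k. card (C i))" by (rule sum_mono) (simp add: big)
  also have "\<dots> = card (\<Union>i<k. C i)"
    by (rule card_UN_disjoint[symmetric]) (auto simp: fin disj)
  also have "\<dots> \<le> card S"
    by (rule card_mono) (use \<open>finite S\<close> sub in auto)
  finally show ?thesis .
qed

lemma L_colouring_cmp_parts_disjoint:
  assumes "L_colouring (cmp_vertices m k) cmp_adj L f" "i < k" "i' < k" "i \<noteq> i'"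
  shows "f ` ({i} \<times> {0..<m}) \<inter> f ` ({i'} \<times> {0..<m}) = {}"
proof (rule ccontr)
  assume "f ` ({i} \<times> {0..<m}) \<inter> f ` ({i'} \<times> {0..<m}) \<noteq> {}"
  then obtain x x' where "x < m" "x' < m" "f (i, x) = f (i', x')" by auto
  with assms show False
    unfolding L_colouring_def cmp_adj_def cmp_vertices_def by fastforce
qed

lemma L_colouring_cmp_part_colours:
  assumes f: "L_colouring (cmp_vertices m k) cmp_adj (\<lambda>v. g (snd v)) f"
    and lists: "g ` {0..<m} = {A. A \<subseteq> S \<and> card A = r}" and "finite S" "i < k"
  shows "f ` ({i} \<times> {0..<m}) \<subseteq> S" and "card S < card (f ` ({i} \<times> {0..<m})) + r"
proof -
  have f_in: "f (i, x) \<in> g x" if "x < m" for x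
    using f that \<open>i < k\<close> unfolding L_colouring_def cmp_vertices_def by auto
  have "f (i, x) \<in> S" if "x < m" for x
    using f_in[OF that] lists that by auto
  then show sub: "f ` ({i} \<times> {0..<m}) \<subseteq> S"
    by auto
  have "A \<inter> f ` ({i} \<times> {0..<m}) \<noteq> {}" if "A \<subseteq> S" "card A = r" for A
  proof -
    have "A \<in> g ` {0..<m}" using lists that by simp
    then obtain x where "x < m" "A = g x" by auto
    then have "f (i, x) \<in> A \<inter> f ` ({i} \<times> {0..<m})" using f_in by auto
    then show ?thesis by blast
  qed
  with \<open>finite S\<close> sub show "card S < card (f ` ({i} \<times> {0..<m})) + r"
    by (rule card_lt_if_meets_all_subsets)
qed

theorem not_choosable_cmp_subsets:
  assumes "1 \<le> j" "r + j \<le> k * j"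
  shows "\<not> choosable (cmp_vertices ((r + j - 1) choose r) k) cmp_adj r"
proof
  define S where "S = {..<r + j - 1}"
  define m where "m = (r + j - 1) choose r"
  have "finite S" "card S = r + j - 1" unfolding S_def by auto
  then have "finite {A. A \<subseteq> S \<and> card A = r}" "card {A. A \<subseteq> S \<and> card A = r} = m"
    unfolding m_def by (auto simp: n_subsets)
  then obtain g where "bij_betw g {0..<m} {A. A \<subseteq> S \<and> card A = r}"
    using ex_bij_betw_nat_finite by blast
  then have lists: "g ` {0..<m} = {A. A \<subseteq> S \<and> card A = r}"
    by (simp add: bij_betw_def)
  assume "choosable (cmp_vertices m k) cmp_adj r"
  moreover have "\<forall>v\<in>cmp_vertices m k. finite (g (snd v)) \<and> r \<le> card (g (snd v))"
  proof
    fix v assume "v \<in> cmp_vertices m k"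
    then have "g (snd v) \<subseteq> S \<and> card (g (snd v)) = r"
      using lists by (auto simp: cmp_vertices_def)
    with \<open>finite S\<close> show "finite (g (snd v)) \<and> r \<le> card (g (snd v))"
      using finite_subset by auto
  qed
  ultimately obtain f where f: "L_colouring (cmp_vertices m k) cmp_adj (\<lambda>v. g (snd v)) f"
    by (rule choosableE)
  have "k * j \<le> card S"
  proof (rule mult_le_card_if_disjoint_subsets[OF \<open>finite S\<close>])
    fix i assume "i < k"
    show "f ` ({i} \<times> {0..<m}) \<subseteq> S"
      using L_colouring_cmp_part_colours(1)[OF f lists \<open>finite S\<close> \<open>i < k\<close>] .
    show "j \<le> card (f ` ({i} \<times> {0..<m}))"
      using L_colouring_cmp_part_colours(2)[OF f lists \<open>finite S\<close> \<open>i < k\<close>]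
        \<open>card S = r + j - 1\<close> by linarith
  next
    fix i i' assume "i < k" "i' < k" "i \<noteq> i'"
    with f show "f ` ({i} \<times> {0..<m}) \<inter> f ` ({i'} \<times> {0..<m}) = {}"
      by (rule L_colouring_cmp_parts_disjoint)
  qed
  with \<open>card S = r + j - 1\<close> assms show False by linarith
qed

theorem mainTheorem3:
  fixes k j :: nat
  assumes "k \<ge> 1" and "j \<ge> 1"
  shows "\<not> choosable (cmp_vertices ((k * j - 1) choose ((k - 1) * j)) k) cmp_adj ((k - 1) * j)"
proof -
  have "(k - 1) * j + j = k * j"
    using assms(1) by (simp add: diff_mult_distrib)
  with not_choosable_cmp_subsets[OF assms(2), of "(k - 1) * j" k] show ?thesis
    by simp
qed

end
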